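(* Let $X$ be a continuous vector field on $\mathbb{S}^1$ with support function $\phi_X$, and let $\eta\in\mathbb{D}^2$. Then $\mathcal{E}_X^-$ (resp. $\mathcal{E}_X^+$) is continuous at $\eta$ if and only if $\Sigma^-(\eta)$ (resp. $\Sigma^+(\eta)$) consists of a single point, i.e. there is a unique support plane of $\mathrm{epi}^+(\phi_X^-)$ at $(\eta,\phi_X^-(\eta))$ (resp. of $\mathrm{epi}^-(\phi_X^+)$ at $(\eta,\phi_X^+(\eta))$).
   Context: $\mathbb{R}^{1,2}$ is $\mathbb{R}^3$ with $\langle x,y\rangle=-x_0y_0+x_1y_1+x_2y_2$; $\Pi(x_0,x_1,x_2)=(x_1/x_0,x_2/x_0)$; $\mathbb{D}^2$ is the open unit disk with boundary $\mathbb{S}^1$. Minkowski cross product: $\langle x\boxtimes y,v\rangle=\det(x,y,v)$. A vector field $X$ on $\mathbb{S}^1$ is $X(z)=iz\phi_X(z)$. $\phi_X^-(\eta)=\sup\{a(\eta):a\text{ affine},a|_{\mathbb{S}^1}\le\phi_X\}$, $\phi_X^+(\eta)=\inf\{a(\eta):a\text{ affine},a|_{\mathbb{S}^1}\ge\phi_X\}$; $\mathrm{epi}^+(\phi_X^-)=\{(\eta,t):t\ge\phi_X^-(\eta)\}$, $\mathrm{epi}^-(\phi_X^+)=\{(\eta,t):t\le\phi_X^+(\eta)\}$. Support planes at points over $\mathbb{D}^2$ are the planes $t=\langle(1,\xi),\sigma\rangle$ with $\sigma\in\Sigma^\pm(\eta)$, where $\Sigma^-(\eta)$ is the set of $\sigma\in\mathbb{R}^{1,2}$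 with $\langle(1,\xi),\sigma\rangle\le\phi_X^-(\xi)$ for all $\xi\in\mathbb{D}^2$ and equality at $\xi=\eta$, and $\Sigma^+(\eta)$ likewise with $\ge\phi_X^+$; each is a point or a compact segment. $\mathcal{E}_X^\pm(\eta)=\mathrm{d}_{(1,\eta)}\Pi((1,\eta)\boxtimes\sigma^\pm(\eta))$ with $\sigma^\pm(\eta)$ the point or midpoint of $\Sigma^\pm(\eta)$. *)

theory Defs
  imports "HOL-Analysis.Analysis"
begin

text \<open>Points of R^{1,2} are triples (x0, x1, x2) :: real \<times> real \<times> real;
  points of R^2 (the plane of D^2 and S^1) are complex numbers.\<close>

type_synonym mink = "real \<times> real \<times> real"

definition mink_inner :: "mink \<Rightarrow> mink \<Rightarrow> real" where
  "mink_inner x y = - fst x * fst y + fst (snd x) * fst (snd y) + snd (snd x) * snd (snd y)"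

definition det3 :: "mink \<Rightarrow> mink \<Rightarrow> mink \<Rightarrow> real" where
  "det3 x y v =
     fst x * (fst (snd y) * snd (snd v) - snd (snd y) * fst (snd v))
   - fst (snd x) * (fst y * snd (snd v) - snd (snd y) * fst v)
   + snd (snd x) * (fst y * fst (snd v) - fst (snd y) * fst v)"

definition mink_cross :: "mink \<Rightarrow> mink \<Rightarrow> mink" where
  "mink_cross x y = (THE w. \<forall>v. mink_inner w v = det3 x y v)"

definition Pi_proj :: "mink \<Rightarrow> complex" where
  "Pi_proj x = Complex (fst (snd x) / fst x) (snd (snd x) / fst x)"

definition lift :: "complex \<Rightarrow> mink" where
  "lift \<xi> = (1, Re \<xi>, Im \<xi>)"

text \<open>Vector field on S^1: X(z) = i z phi_X(z) with phi_X real-valued.\<close>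
definition support_fn :: "(complex \<Rightarrow> complex) \<Rightarrow> complex \<Rightarrow> real" where
  "support_fn X z = Re (X z / (\<i> * z))"

definition is_vector_field_S1 :: "(complex \<Rightarrow> complex) \<Rightarrow> bool" where
  "is_vector_field_S1 X \<longleftrightarrow>
     (\<forall>z\<in>sphere 0 1. X z = \<i> * z * complex_of_real (support_fn X z))"

definition phi_minus :: "(complex \<Rightarrow> real) \<Rightarrow> complex \<Rightarrow> real" where
  "phi_minus \<phi> \<eta> = Sup {c + b1 * Re \<eta> + b2 * Im \<eta> | c b1 b2.
       \<forall>z\<in>sphere 0 1. c + b1 * Re z + b2 * Im z \<le> \<phi> z}"

definition phi_plus :: "(complex \<Rightarrow> real) \<Rightarrow> complex \<Rightarrow> real" where
  "phi_plus \<phi> \<eta> = Inf {c + b1 * Re \<eta> + b2 * Im \<eta> | c b1 b2.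
       \<forall>z\<in>sphere 0 1. c + b1 * Re z + b2 * Im z \<ge> \<phi> z}"

definition Sigma_minus :: "(complex \<Rightarrow> complex) \<Rightarrow> complex \<Rightarrow> mink set" where
  "Sigma_minus X \<eta> = {\<sigma>. (\<forall>\<xi>\<in>ball 0 1. mink_inner (lift \<xi>) \<sigma> \<le> phi_minus (support_fn X) \<xi>)
       \<and> mink_inner (lift \<eta>) \<sigma> = phi_minus (support_fn X) \<eta>}"

definition Sigma_plus :: "(complex \<Rightarrow> complex) \<Rightarrow> complex \<Rightarrow> mink set" where
  "Sigma_plus X \<eta> = {\<sigma>. (\<forall>\<xi>\<in>ball 0 1. mink_inner (lift \<xi>) \<sigma> \<ge> phi_plus (support_fn X) \<xi>)
       \<and> mink_inner (lift \<eta>) \<sigma> = phi_plus (support_fn X) \<eta>}"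

text \<open>The point of a singleton, or the midpoint of a compact segment.\<close>
definition seg_mid :: "mink set \<Rightarrow> mink" where
  "seg_mid S = (THE m. \<exists>a b. S = closed_segment a b \<and> m = midpoint a b)"

definition E_field :: "mink \<Rightarrow> complex \<Rightarrow> complex" where
  "E_field \<sigma> \<eta> = frechet_derivative Pi_proj (at (lift \<eta>)) (mink_cross (lift \<eta>) \<sigma>)"

definition E_minus :: "(complex \<Rightarrow> complex) \<Rightarrow> complex \<Rightarrow> complex" where
  "E_minus X \<eta> = E_field (seg_mid (Sigma_minus X \<eta>)) \<eta>"

definition E_plus :: "(complex \<Rightarrow> complex) \<Rightarrow> complex \<Rightarrow> complex" where
  "E_plus X \<eta> = E_field (seg_mid (Sigma_plus X \<eta>)) \<eta>"

end

(* For eta in the open disc, Sigma^-(eta) is the set of affine minorants of phi_X on the circle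
   that touch phi_X^- at eta.  It is nonempty and compact (phi_X^-(eta) is attained as a maximum
   over a compact set of minorants), convex, and at most one-dimensional: if three touching
   planes had affinely independent slopes, their average raised by a small epsilon would still
   be a minorant and would exceed phi_X^- at eta.  So Sigma^-(eta) is a point or a segment [a, b].
   The map xi |-> Sigma^-(xi) has closed graph and is locally bounded; hence if
   Sigma^-(eta) = {sigma}, the midpoints sigma^-(xi) tend to sigma and E^- is continuous at eta.
   If a <> b, approach eta in the direction slope a - slope b: the support planes there converge
   to the endpoint a, so E^- tends to E(a), which differs from E^-(eta) = E(midpoint a b) because
   sigma |-> dPi((1,eta) x sigma) is injective on the plane <(1,eta), sigma> = 0.  The case of
   E^+ follows from phi |-> -phi. *)

theory Submission
  imports Defs
begin

lemma unit_vector_aligned: "\<exists>z. norm z = 1 \<and> w \<bullet> z = norm (w :: complex)"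
proof (cases "w = 0")
  case True
  then show ?thesis by (intro exI[of _ 1]) simp
next
  case False
  then show ?thesis
    by (intro exI[of _ "sgn w"]) (simp add: norm_sgn sgn_div_norm divide_inverse inner_scaleR_right power2_eq_square flip: power2_norm_eq_inner)
qed

lemma nonpos_if_scaled_le:
  fixes D K :: real
  assumes "\<And>r. 0 \<le> r \<Longrightarrow> r < 1 \<Longrightarrow> r * D \<le> (1 - r) * K"
  shows "D \<le> 0"
proof -
  have "((\<lambda>r. r * D - (1 - r) * K) \<longlongrightarrow> 1 * D - (1 - 1) * K) (at_left 1)"
    by (intro tendsto_intros)
  moreover have "\<forall>\<^sub>F r in at_left (1 :: real). r \<in> {0<..<1}"
    by (rule eventually_at_left_real) simp
  then have "\<forall>\<^sub>F r in at_left 1. r * D - (1 - r) * K \<le> 0"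
    by (rule eventually_mono) (use assms in auto)
  ultimately show ?thesis
    using tendsto_upperbound trivial_limit_at_left_real by fastforce
qed

lemma abs_det_mult_norm_le:
  fixes p q u :: complex
  shows "\<bar>Im (cnj p * q)\<bar> * norm u \<le> (norm p + norm q) * (\<bar>p \<bullet> u\<bar> + \<bar>q \<bullet> u\<bar>)"
proof -
  define w where "w = of_real (q \<bullet> u) * p - of_real (p \<bullet> u) * q"
  define D where "D = Im (cnj p * q)"
  have eq: "of_real D * u = \<i> * w"
    by (simp add: w_def D_def complex_eq_iff inner_complex_def algebra_simps)
  have "\<bar>Im (cnj p * q)\<bar> * norm u = norm (of_real D * u)"
    by (simp only: D_def norm_mult norm_of_real)
  also have "\<dots> = norm w"
    by (simp only: eq norm_mult norm_ii mult_1)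
  also have "\<dots> \<le> \<bar>q \<bullet> u\<bar> * norm p + \<bar>p \<bullet> u\<bar> * norm q"
    using norm_triangle_ineq4[of "of_real (q \<bullet> u) * p" "of_real (p \<bullet> u) * q"]
    by (simp add: w_def norm_mult)
  also have "\<dots> \<le> (norm p + norm q) * (\<bar>p \<bullet> u\<bar> + \<bar>q \<bullet> u\<bar>)"
    by (simp add: distrib_left distrib_right)
  finally show ?thesis .
qed

lemma mean3_le_max3:
  fixes a x y :: real
  shows "(a + (a + x) + (a + y)) / 3 + (\<bar>x\<bar> + \<bar>y\<bar>) / 6 \<le> max a (max (a + x) (a + y))"
  by (simp add: max_def abs_if field_simps)

lemma LIMSEQ_if_subseqs_have_LIMSEQ_subseq:
  fixes X :: "nat \<Rightarrow> 'a::metric_space"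
  assumes "\<And>r :: nat \<Rightarrow> nat. strict_mono r \<Longrightarrow> \<exists>s. strict_mono s \<and> (X \<circ> r \<circ> s) \<longlonglongrightarrow> L"
  shows "X \<longlonglongrightarrow> L"
proof (rule ccontr)
  assume "\<not> X \<longlonglongrightarrow> L"
  then obtain e where "e > 0" and "\<not> (\<forall>\<^sub>F n in sequentially. dist (X n) L < e)"
    unfolding tendsto_iff by blast
  then have "infinite {n. \<not> dist (X n) L < e}"
    using eventually_cofinite[of "\<lambda>n. dist (X n) L < e"] by (simp add: cofinite_eq_sequentially)
  then obtain r :: "nat \<Rightarrow> nat" where r: "strict_mono r" "\<forall>n. \<not> dist (X (r n)) L < e"
    using infinite_enumerate by blast
  then obtain s where "(X \<circ> r \<circ> s) \<longlonglongrightarrow> L" using assms by blast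
  then obtain N where "\<forall>n\<ge>N. dist (X (r (s n))) L < e"
    using \<open>e > 0\<close> unfolding tendsto_iff eventually_sequentially by fastforce
  then show False using r(2) by blast
qed

lemma isCont_uminus_iff:
  fixes f :: "'a::t2_space \<Rightarrow> 'b::real_normed_vector"
  shows "isCont (\<lambda>x. - f x) a \<longleftrightarrow> isCont f a"
  using continuous_minus[of "at a" f] continuous_minus[of "at a" "\<lambda>x. - f x"] by auto

lemma ex_singleton_uminus_image:
  fixes S :: "'a::group_add set"
  shows "(\<exists>\<sigma>. uminus ` S = {\<sigma>}) \<longleftrightarrow> (\<exists>\<sigma>. S = {\<sigma>})"
proof
  assume "\<exists>\<sigma>. uminus ` S = {\<sigma>}"
  then obtain \<sigma> where "uminus ` S = {\<sigma>}" by blast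
  then have "uminus ` uminus ` S = {- \<sigma>}" by simp
  then show "\<exists>\<sigma>. S = {\<sigma>}" by (auto simp: image_image)
qed auto

lemma mem_uminus_image: "\<sigma> \<in> uminus ` S \<longleftrightarrow> - \<sigma> \<in> (S :: 'a::group_add set)"
  by (metis image_eqI imageE minus_minus)

lemma uminus_image_closed_segment:
  "uminus ` closed_segment a b = closed_segment (- a) (- b :: 'a::real_vector)"
  using closed_segment_linear_image[of uminus a b] by (simp add: linear_uminus)

lemma seg_mid_closed_segment: "seg_mid (closed_segment a b) = midpoint a b"
  unfolding seg_mid_def
proof (rule the_equality)
  fix m assume "\<exists>a' b'. closed_segment a b = closed_segment a' b' \<and> m = midpoint a' b'"
  then obtain a' b' where "{a, b} = {a', b'}" "m = midpoint a' b'" by auto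
  then show "m = midpoint a b" by (metis doubleton_eq_iff midpoint_sym)
qed blast

section \<open>Planes and the field \<open>E\<close> in coordinates\<close>

lemma mink_cross_eq:
  "mink_cross (x0, x1, x2) (y0, y1, y2) = (x2 * y1 - x1 * y2, x2 * y0 - x0 * y2, x0 * y1 - x1 * y0)"
  unfolding mink_cross_def
proof (rule the_equality)
  fix w assume w: "\<forall>v. mink_inner w v = det3 (x0, x1, x2) (y0, y1, y2) v"
  have "mink_inner w (1,0,0) = det3 (x0, x1, x2) (y0, y1, y2) (1,0,0)"
    "mink_inner w (0,1,0) = det3 (x0, x1, x2) (y0, y1, y2) (0,1,0)"
    "mink_inner w (0,0,1) = det3 (x0, x1, x2) (y0, y1, y2) (0,0,1)"
    using w by blast+
  then show "w = (x2 * y1 - x1 * y2, x2 * y0 - x0 * y2, x0 * y1 - x1 * y0)"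
    by (cases w) (auto simp: mink_inner_def det3_def)
qed (simp add: mink_inner_def det3_def algebra_simps)

lemma Pi_proj_has_derivative:
  "(Pi_proj has_derivative (\<lambda>h. Complex (fst (snd h) - a * fst h) (snd (snd h) - b * fst h)))
     (at (1, a, b))"
proof -
  have Pi: "Pi_proj = (\<lambda>x. of_real (fst (snd x) / fst x) + \<i> * of_real (snd (snd x) / fst x))"
    by (auto simp: Pi_proj_def fun_eq_iff complex_eq_iff)
  show ?thesis
    unfolding Pi by (auto intro!: derivative_eq_intros simp: fun_eq_iff complex_eq_iff)
qed

lemma E_field_eq:
  "E_field (s0, s1, s2) \<eta> =
     Complex (Im \<eta> * s0 - s2 - Re \<eta> * (Im \<eta> * s1 - Re \<eta> * s2))
             (s1 - Re \<eta> * s0 - Im \<eta> * (Im \<eta> * s1 - Re \<eta> * s2))"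
  using frechet_derivative_at[OF Pi_proj_has_derivative[of "Re \<eta>" "Im \<eta>"], symmetric]
  by (simp add: E_field_def lift_def mink_cross_eq)

lemma E_field_diff: "E_field (\<sigma> - \<tau>) \<eta> = E_field \<sigma> \<eta> - E_field \<tau> \<eta>"
  by (cases \<sigma>; cases \<tau>) (simp add: E_field_eq complex_eq_iff algebra_simps)

lemma E_field_uminus: "E_field (- \<sigma>) \<eta> = - E_field \<sigma> \<eta>"
  by (cases \<sigma>) (simp add: E_field_eq complex_eq_iff algebra_simps)

lemma E_field_tendsto:
  assumes "g \<longlonglongrightarrow> \<sigma>" and "x \<longlonglongrightarrow> \<eta>"
  shows "(\<lambda>n. E_field (g n) (x n)) \<longlonglongrightarrow> E_field \<sigma> \<eta>"
proof -
  have E: "E_field \<tau> \<xi> =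
     Complex (Im \<xi> * fst \<tau> - snd (snd \<tau>) - Re \<xi> * (Im \<xi> * fst (snd \<tau>) - Re \<xi> * snd (snd \<tau>)))
             (fst (snd \<tau>) - Re \<xi> * fst \<tau> - Im \<xi> * (Im \<xi> * fst (snd \<tau>) - Re \<xi> * snd (snd \<tau>)))"
    for \<tau> \<xi> by (cases \<tau>) (simp add: E_field_eq)
  show ?thesis
    unfolding E by (intro tendsto_intros assms)
qed

definition aff :: "mink \<Rightarrow> complex \<Rightarrow> real" where
  "aff \<sigma> \<xi> = - fst \<sigma> + fst (snd \<sigma>) * Re \<xi> + snd (snd \<sigma>) * Im \<xi>"

definition slope :: "mink \<Rightarrow> complex" where
  "slope \<sigma> = Complex (fst (snd \<sigma>)) (snd (snd \<sigma>))"

lemma mink_inner_lift: "mink_inner (lift \<xi>) \<sigma> = aff \<sigma> \<xi>"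
  by (simp add: mink_inner_def lift_def aff_def)

lemma aff_eq_slope: "aff \<sigma> \<xi> = slope \<sigma> \<bullet> \<xi> - fst \<sigma>"
  by (simp add: aff_def slope_def inner_complex_def)

lemma aff_eq_inner: "aff \<sigma> \<xi> = (-1, Re \<xi>, Im \<xi>) \<bullet> \<sigma>"
  by (simp add: aff_def inner_prod_def)

lemma aff_linear:
  "aff (\<sigma> + \<tau>) \<xi> = aff \<sigma> \<xi> + aff \<tau> \<xi>" "aff (\<sigma> - \<tau>) \<xi> = aff \<sigma> \<xi> - aff \<tau> \<xi>"
  "aff (c *\<^sub>R \<sigma>) \<xi> = c * aff \<sigma> \<xi>" "aff (- \<sigma>) \<xi> = - aff \<sigma> \<xi>"
  by (simp_all add: aff_eq_inner inner_add_right inner_diff_right)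

lemma slope_linear:
  "slope (\<sigma> + \<tau>) = slope \<sigma> + slope \<tau>" "slope (\<sigma> - \<tau>) = slope \<sigma> - slope \<tau>"
  "slope (c *\<^sub>R \<sigma>) = c *\<^sub>R slope \<sigma>"
  by (simp_all add: slope_def complex_eq_iff)

lemma mink_eq_iff_aff_slope: "\<sigma> = \<tau> \<longleftrightarrow> aff \<sigma> \<xi> = aff \<tau> \<xi> \<and> slope \<sigma> = slope \<tau>"
  by (cases \<sigma>; cases \<tau>) (auto simp: aff_def slope_def complex_eq_iff)

text \<open>\<open>E_field v \<eta>\<close> is \<open>d\<Pi>\<close> applied to \<open>lift \<eta> \<boxtimes> v\<close>, a vector orthogonal to the timelike
  \<open>lift \<eta>\<close>, on which \<open>d\<Pi>\<close> is injective; so it vanishes only for \<open>v\<close> parallel to \<open>lift \<eta>\<close>,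
  and such a \<open>v\<close> is orthogonal to \<open>lift \<eta>\<close> only if it is \<open>0\<close>.\<close>

lemma E_field_injective:
  assumes "norm \<eta> < 1" and "aff v \<eta> = 0" and "E_field v \<eta> = 0"
  shows "v = 0"
proof -
  obtain s0 s1 s2 where v: "v = (s0, s1, s2)" by (cases v)
  define a b where "a = Re \<eta>" and "b = Im \<eta>"
  define w where "w = b * s1 - a * s2"
  have s2: "s2 = b * s0 - a * w" and s1: "s1 = a * s0 + b * w"
    using assms(3) by (simp_all add: v E_field_eq a_def b_def w_def Complex_eq_0)
  have ab: "a\<^sup>2 + b\<^sup>2 < 1"
    using assms(1) by (simp add: a_def b_def norm_complex_def)
  have "w = b * (a * s0 + b * w) - a * (b * s0 - a * w)"
    by (subst w_def) (simp only: s1 s2)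
  then have "w * (1 - (a\<^sup>2 + b\<^sup>2)) = 0" by (simp add: algebra_simps power2_eq_square)
  then have "w = 0" using ab by simp
  moreover have "s0 * (1 - (a\<^sup>2 + b\<^sup>2)) = 0"
    using assms(2) s1 s2 \<open>w = 0\<close> by (simp add: v aff_def a_def b_def algebra_simps power2_eq_square)
  then have "s0 = 0" using ab by simp
  ultimately show ?thesis by (simp add: v s1 s2 zero_prod_def)
qed

section \<open>Support planes of the lower envelope\<close>

definition affine_minorants :: "(complex \<Rightarrow> real) \<Rightarrow> mink set" where
  "affine_minorants \<phi> = {\<sigma>. \<forall>z\<in>sphere 0 1. aff \<sigma> z \<le> \<phi> z}"

definition Sigma_lower :: "(complex \<Rightarrow> real) \<Rightarrow> complex \<Rightarrow> mink set" where
  "Sigma_lower \<phi> \<eta> = {\<sigma>. (\<forall>\<xi>\<in>ball 0 1. aff \<sigma> \<xi> \<le> phi_minus \<phi> \<xi>) \<and> aff \<sigma> \<eta> = phi_minus \<phi> \<eta>}"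

definition E_lower :: "(complex \<Rightarrow> real) \<Rightarrow> complex \<Rightarrow> complex" where
  "E_lower \<phi> \<eta> = E_field (seg_mid (Sigma_lower \<phi> \<eta>)) \<eta>"

lemma Sigma_minus_eq: "Sigma_minus X = Sigma_lower (support_fn X)"
  by (simp add: fun_eq_iff Sigma_minus_def Sigma_lower_def mink_inner_lift)

lemma E_minus_eq: "E_minus X = E_lower (support_fn X)"
  by (simp add: fun_eq_iff E_minus_def E_lower_def Sigma_minus_eq)

lemma phi_minus_eq_Sup: "phi_minus \<phi> \<xi> = Sup ((\<lambda>\<sigma>. aff \<sigma> \<xi>) ` affine_minorants \<phi>)"
proof -
  have "{c + b1 * Re \<xi> + b2 * Im \<xi> | c b1 b2. \<forall>z\<in>sphere 0 1. c + b1 * Re z + b2 * Im z \<le> \<phi> z}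
      = (\<lambda>\<sigma>. aff \<sigma> \<xi>) ` affine_minorants \<phi>"
    by (auto simp: aff_def affine_minorants_def image_iff) (metis add_uminus_conv_diff add.commute minus_minus)+
  then show ?thesis by (simp add: phi_minus_def)
qed

lemma affine_minorants_eq_INT:
  "affine_minorants \<phi> = (\<Inter>z\<in>sphere 0 1. {\<sigma>. (-1, Re z, Im z) \<bullet> \<sigma> \<le> \<phi> z})"
  by (auto simp: affine_minorants_def aff_eq_inner)

lemma closed_affine_minorants: "closed (affine_minorants \<phi>)"
  by (simp add: affine_minorants_eq_INT closed_INT closed_halfspace_le)

lemma convex_affine_minorants: "convex (affine_minorants \<phi>)"
  by (simp add: affine_minorants_eq_INT convex_INT convex_halfspace_le)

lemma aff_tendsto:
  assumes "g \<longlonglongrightarrow> \<sigma>" and "x \<longlonglongrightarrow> \<xi>"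
  shows "(\<lambda>n. aff (g n) (x n)) \<longlonglongrightarrow> aff \<sigma> \<xi>"
  unfolding aff_def by (intro tendsto_intros assms)

context
  fixes \<phi> :: "complex \<Rightarrow> real" and M :: real
  assumes phi_bounded: "\<forall>z\<in>sphere 0 1. \<bar>\<phi> z\<bar> \<le> M"
begin

lemma const_minorant: "(M, 0, 0) \<in> affine_minorants \<phi>"
  using phi_bounded by (auto simp: affine_minorants_def aff_def abs_le_iff)

lemma minorant_slope_bound:
  assumes "\<sigma> \<in> affine_minorants \<phi>" and "norm \<xi> \<le> 1"
  shows "norm (slope \<sigma>) * (1 - norm \<xi>) \<le> M - aff \<sigma> \<xi>"
proof -
  obtain z where z: "norm z = 1" "slope \<sigma> \<bullet> z = norm (slope \<sigma>)"
    using unit_vector_aligned by blast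
  have "norm (slope \<sigma>) - fst \<sigma> = aff \<sigma> z" using z by (simp add: aff_eq_slope)
  also have "\<dots> \<le> \<phi> z" using assms(1) z by (simp add: affine_minorants_def)
  also have "\<dots> \<le> M" using phi_bounded z by (simp add: abs_le_iff)
  finally have "norm (slope \<sigma>) - fst \<sigma> \<le> M" .
  moreover have "aff \<sigma> \<xi> \<le> norm (slope \<sigma>) * norm \<xi> - fst \<sigma>"
    using norm_cauchy_schwarz[of "slope \<sigma>" \<xi>] by (simp add: aff_eq_slope)
  ultimately show ?thesis by (simp add: right_diff_distrib)
qed

lemma minorant_le_bound:
  assumes "\<sigma> \<in> affine_minorants \<phi>" and "norm \<xi> \<le> 1"
  shows "aff \<sigma> \<xi> \<le> M"
proof -
  have "0 \<le> norm (slope \<sigma>) * (1 - norm \<xi>)" using assms(2) by simp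
  then show ?thesis using minorant_slope_bound[OF assms] by linarith
qed

lemma minorant_le_phi_minus:
  "\<sigma> \<in> affine_minorants \<phi> \<Longrightarrow> norm \<xi> \<le> 1 \<Longrightarrow> aff \<sigma> \<xi> \<le> phi_minus \<phi> \<xi>"
  unfolding phi_minus_eq_Sup
  by (rule cSup_upper) (auto intro!: bdd_aboveI[of _ M] minorant_le_bound)

lemma phi_minus_lower_bound: "norm \<xi> \<le> 1 \<Longrightarrow> - M \<le> phi_minus \<phi> \<xi>"
  using minorant_le_phi_minus[OF const_minorant] by (simp add: aff_def)

lemma phi_minus_radial_bound:
  assumes "norm z = 1" and "0 \<le> r" "r \<le> 1"
  shows "phi_minus \<phi> (of_real r * z) \<le> r * \<phi> z + (1 - r) * M"
  unfolding phi_minus_eq_Sup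
proof (rule cSup_least)
  show "(\<lambda>\<sigma>. aff \<sigma> (of_real r * z)) ` affine_minorants \<phi> \<noteq> {}"
    using const_minorant by blast
next
  fix t assume "t \<in> (\<lambda>\<sigma>. aff \<sigma> (of_real r * z)) ` affine_minorants \<phi>"
  then obtain \<sigma> where \<sigma>: "\<sigma> \<in> affine_minorants \<phi>" and t: "t = aff \<sigma> (of_real r * z)"
    by blast
  have "aff \<sigma> (of_real r * z) = r * aff \<sigma> z + (1 - r) * aff \<sigma> 0"
    by (simp add: aff_def algebra_simps)
  moreover have "aff \<sigma> z \<le> \<phi> z" using \<sigma> assms(1) by (simp add: affine_minorants_def)
  moreover have "aff \<sigma> 0 \<le> M" using minorant_le_bound[OF \<sigma>] by simp
  ultimately show "t \<le> r * \<phi> z + (1 - r) * M"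
    unfolding t using assms(2,3) by (simp add: add_mono mult_left_mono)
qed

text \<open>A support plane of \<open>\<phi>\<^sup>-\<close> over the open disc stays below \<open>\<phi>\<close> on the circle: compare
  the two along the radius through a boundary point, using \<open>phi_minus_radial_bound\<close>.\<close>

lemma Sigma_lower_eq:
  assumes "\<xi> \<in> ball 0 1"
  shows "Sigma_lower \<phi> \<xi> = {\<sigma> \<in> affine_minorants \<phi>. aff \<sigma> \<xi> = phi_minus \<phi> \<xi>}"
proof (intro equalityI subsetI)
  fix \<sigma> assume "\<sigma> \<in> {\<sigma> \<in> affine_minorants \<phi>. aff \<sigma> \<xi> = phi_minus \<phi> \<xi>}"
  then show "\<sigma> \<in> Sigma_lower \<phi> \<xi>" by (auto simp: Sigma_lower_def minorant_le_phi_minus)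
next
  fix \<sigma> assume \<sigma>: "\<sigma> \<in> Sigma_lower \<phi> \<xi>"
  have "aff \<sigma> z - \<phi> z \<le> 0" if z: "norm z = 1" for z
  proof (rule nonpos_if_scaled_le)
    fix r :: real assume r: "0 \<le> r" "r < 1"
    have "of_real r * z \<in> ball 0 1" using z r by (simp add: norm_mult)
    then have "aff \<sigma> (of_real r * z) \<le> phi_minus \<phi> (of_real r * z)"
      using \<sigma> by (simp add: Sigma_lower_def)
    also have "\<dots> \<le> r * \<phi> z + (1 - r) * M" using phi_minus_radial_bound z r by simp
    finally show "r * (aff \<sigma> z - \<phi> z) \<le> (1 - r) * (M - aff \<sigma> 0)"
      by (simp add: aff_def algebra_simps)
  qed
  then show "\<sigma> \<in> {\<sigma> \<in> affine_minorants \<phi>. aff \<sigma> \<xi> = phi_minus \<phi> \<xi>}"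
    using \<sigma> by (simp add: affine_minorants_def Sigma_lower_def)
qed

lemma minorant_norm_bound:
  assumes \<sigma>: "\<sigma> \<in> affine_minorants \<phi>" and \<xi>: "norm \<xi> < 1" and lower: "- M \<le> aff \<sigma> \<xi>"
  shows "norm \<sigma> \<le> M + 4 * M / (1 - norm \<xi>)"
proof -
  have "norm (slope \<sigma>) * (1 - norm \<xi>) \<le> M - aff \<sigma> \<xi>"
    using minorant_slope_bound[OF \<sigma>] \<xi> by simp
  then have "norm (slope \<sigma>) * (1 - norm \<xi>) \<le> 2 * M"
    using lower by simp
  then have slope: "norm (slope \<sigma>) \<le> 2 * M / (1 - norm \<xi>)"
    using \<xi> by (simp add: pos_le_divide_eq)
  have "\<bar>slope \<sigma> \<bullet> \<xi>\<bar> \<le> norm (slope \<sigma>)"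
    using Cauchy_Schwarz_ineq2[of "slope \<sigma>" \<xi>] \<xi> mult_left_le[of "norm \<xi>" "norm (slope \<sigma>)"]
    by simp
  moreover have "aff \<sigma> \<xi> \<le> M" using minorant_le_bound[OF \<sigma>] \<xi> by simp
  ultimately have "\<bar>fst \<sigma>\<bar> \<le> M + norm (slope \<sigma>)"
    using lower by (simp add: aff_eq_slope)
  moreover have "norm \<sigma> \<le> \<bar>fst \<sigma>\<bar> + norm (slope \<sigma>)"
    using norm_Pair_le[of "fst \<sigma>" "snd \<sigma>"]
    by (cases \<sigma>) (simp add: slope_def norm_Pair norm_complex_def)
  ultimately show ?thesis using slope by simp
qed

lemma Sigma_lower_norm_bound:
  "\<xi> \<in> ball 0 1 \<Longrightarrow> \<sigma> \<in> Sigma_lower \<phi> \<xi> \<Longrightarrow> norm \<sigma> \<le> M + 4 * M / (1 - norm \<xi>)"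
  using minorant_norm_bound phi_minus_lower_bound by (simp add: Sigma_lower_eq)

lemma Sigma_lower_nonempty:
  assumes \<xi>: "\<xi> \<in> ball 0 1"
  shows "Sigma_lower \<phi> \<xi> \<noteq> {}"
proof -
  define K where "K = affine_minorants \<phi> \<inter> {\<sigma>. - M \<le> aff \<sigma> \<xi>}"
  have "closed K"
    unfolding K_def aff_eq_inner by (intro closed_Int closed_affine_minorants closed_halfspace_ge)
  moreover have "bounded K"
    unfolding bounded_iff K_def using minorant_norm_bound \<xi>
    by (intro exI[of _ "M + 4 * M / (1 - norm \<xi>)"]) auto
  moreover have "K \<noteq> {}"
    using const_minorant unfolding K_def by (force simp: aff_def)
  moreover have "continuous_on K (\<lambda>\<sigma>. aff \<sigma> \<xi>)"
    unfolding aff_def by (intro continuous_intros)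
  ultimately obtain s where s: "s \<in> K" and s_max: "\<forall>\<sigma>\<in>K. aff \<sigma> \<xi> \<le> aff s \<xi>"
    using continuous_attains_sup compact_eq_bounded_closed by metis
  then have "\<forall>\<sigma>\<in>affine_minorants \<phi>. aff \<sigma> \<xi> \<le> aff s \<xi>"
    unfolding K_def by force
  then have "phi_minus \<phi> \<xi> = aff s \<xi>"
    using s unfolding phi_minus_eq_Sup K_def by (intro cSup_eq_maximum) auto
  then have "s \<in> Sigma_lower \<phi> \<xi>"
    using s \<xi> by (simp add: Sigma_lower_eq K_def)
  then show ?thesis by blast
qed

subsection \<open>The support set is a point or a segment\<close>

lemma Sigma_lower_limit:
  assumes x: "\<forall>n. x n \<in> ball 0 1" "x \<longlonglongrightarrow> \<eta>" and \<eta>: "\<eta> \<in> ball 0 1"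
    and g: "\<forall>n. g n \<in> Sigma_lower \<phi> (x n)" "g \<longlonglongrightarrow> \<sigma>"
  shows "\<sigma> \<in> Sigma_lower \<phi> \<eta>"
proof -
  have g_min: "\<forall>n. g n \<in> affine_minorants \<phi>" and g_eq: "\<forall>n. aff (g n) (x n) = phi_minus \<phi> (x n)"
    using x g Sigma_lower_eq by auto
  have \<sigma>: "\<sigma> \<in> affine_minorants \<phi>"
    using closed_sequentially[OF closed_affine_minorants _ g(2)] g_min by blast
  obtain s where "s \<in> Sigma_lower \<phi> \<eta>" using Sigma_lower_nonempty[OF \<eta>] by blast
  then have s: "s \<in> affine_minorants \<phi>" "aff s \<eta> = phi_minus \<phi> \<eta>"
    using Sigma_lower_eq[OF \<eta>] by auto
  have "aff s (x n) \<le> aff (g n) (x n)" for n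
    using minorant_le_phi_minus[OF s(1)] x g_eq by (simp add: less_imp_le)
  then have "aff s \<eta> \<le> aff \<sigma> \<eta>"
    using LIMSEQ_le[OF aff_tendsto[OF tendsto_const x(2)] aff_tendsto[OF g(2) x(2)]] by simp
  moreover have "aff \<sigma> \<eta> \<le> phi_minus \<phi> \<eta>" using minorant_le_phi_minus[OF \<sigma>] \<eta> by simp
  ultimately show ?thesis using s \<sigma> Sigma_lower_eq[OF \<eta>] by simp
qed

lemma compact_Sigma_lower: "\<xi> \<in> ball 0 1 \<Longrightarrow> compact (Sigma_lower \<phi> \<xi>)"
  unfolding compact_eq_bounded_closed closed_sequential_limits bounded_iff
  using Sigma_lower_limit[of "\<lambda>_. \<xi>"] Sigma_lower_norm_bound by blast

lemma convex_Sigma_lower: "\<xi> \<in> ball 0 1 \<Longrightarrow> convex (Sigma_lower \<phi> \<xi>)"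
proof -
  assume "\<xi> \<in> ball 0 1"
  then have "Sigma_lower \<phi> \<xi> =
      affine_minorants \<phi> \<inter> {\<sigma>. (-1, Re \<xi>, Im \<xi>) \<bullet> \<sigma> = phi_minus \<phi> \<xi>}"
    by (auto simp: Sigma_lower_eq aff_eq_inner)
  then show ?thesis by (simp add: convex_Int convex_affine_minorants convex_hyperplane)
qed

lemma Sigma_lower_slope_inj:
  assumes "\<xi> \<in> ball 0 1" "a \<in> Sigma_lower \<phi> \<xi>" "b \<in> Sigma_lower \<phi> \<xi>" "slope a = slope b"
  shows "a = b"
  using assms by (auto simp: Sigma_lower_def mink_eq_iff_aff_slope[where \<xi> = \<xi>])

lemma Sigma_lower_slopes_dependent:
  assumes \<xi>: "\<xi> \<in> ball 0 1"
    and abc: "a \<in> Sigma_lower \<phi> \<xi>" "b \<in> Sigma_lower \<phi> \<xi>" "c \<in> Sigma_lower \<phi> \<xi>"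
  shows "Im (cnj (slope b - slope a) * (slope c - slope a)) = 0"
proof (rule ccontr)
  define p q where "p = slope b - slope a" and "q = slope c - slope a"
  define D where "D = Im (cnj p * q)"
  assume "Im (cnj (slope b - slope a) * (slope c - slope a)) \<noteq> 0"
  then have "D \<noteq> 0" by (simp add: D_def p_def q_def)
  then have "p \<noteq> 0" by (auto simp: D_def)
  then have pq: "norm p + norm q > 0" by (simp add: add_pos_nonneg)
  have min: "a \<in> affine_minorants \<phi>" "b \<in> affine_minorants \<phi>" "c \<in> affine_minorants \<phi>"
    and eq: "aff a \<xi> = phi_minus \<phi> \<xi>" "aff b \<xi> = phi_minus \<phi> \<xi>" "aff c \<xi> = phi_minus \<phi> \<xi>"
    using abc Sigma_lower_eq[OF \<xi>] by auto
  have shift: "aff b z = aff a z + p \<bullet> (z - \<xi>)" "aff c z = aff a z + q \<bullet> (z - \<xi>)" for z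
    using eq by (simp_all add: aff_eq_slope p_def q_def inner_diff_left inner_diff_right)
  define \<epsilon> where "\<epsilon> = \<bar>D\<bar> * (1 - norm \<xi>) / (6 * (norm p + norm q))"
  have "\<epsilon> > 0" using \<open>D \<noteq> 0\<close> \<xi> pq by (simp add: \<epsilon>_def)
  define m where "m = (1/3) *\<^sub>R (a + b + c) - (\<epsilon>, 0, 0)"
  have aff_m: "aff m z = (aff a z + aff b z + aff c z) / 3 + \<epsilon>" for z
    by (simp add: m_def aff_linear add_divide_distrib) (simp add: aff_def)
  have "aff m z \<le> \<phi> z" if z: "norm z = 1" for z
  proof -
    have "1 - norm \<xi> \<le> norm (z - \<xi>)" using z norm_triangle_ineq2[of z \<xi>] by simp
    then have "\<bar>D\<bar> * (1 - norm \<xi>) \<le> (norm p + norm q) * (\<bar>p \<bullet> (z - \<xi>)\<bar> + \<bar>q \<bullet> (z - \<xi>)\<bar>)"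
      using abs_det_mult_norm_le[of p q "z - \<xi>"] mult_left_mono[of _ _ "\<bar>D\<bar>"]
      unfolding D_def by (meson abs_ge_zero order_trans)
    then have "\<epsilon> \<le> (\<bar>p \<bullet> (z - \<xi>)\<bar> + \<bar>q \<bullet> (z - \<xi>)\<bar>) / 6"
      unfolding \<epsilon>_def using pq by (simp add: field_simps mult.commute)
    then have "aff m z \<le> max (aff a z) (max (aff b z) (aff c z))"
      using mean3_le_max3[of "aff a z" "p \<bullet> (z - \<xi>)" "q \<bullet> (z - \<xi>)"] unfolding aff_m shift
      by linarith
    also have "\<dots> \<le> \<phi> z" using min z by (simp add: affine_minorants_def)
    finally show ?thesis .
  qed
  then have "aff m \<xi> \<le> phi_minus \<phi> \<xi>"
    using \<xi> by (intro minorant_le_phi_minus) (auto simp: affine_minorants_def)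
  moreover have "aff m \<xi> = phi_minus \<phi> \<xi> + \<epsilon>" using eq by (simp add: aff_m)
  ultimately show False using \<open>\<epsilon> > 0\<close> by simp
qed

lemma Sigma_lower_collinear_triple:
  assumes \<xi>: "\<xi> \<in> ball 0 1"
    and abc: "a \<in> Sigma_lower \<phi> \<xi>" "b \<in> Sigma_lower \<phi> \<xi>" "c \<in> Sigma_lower \<phi> \<xi>" and "a \<noteq> b"
  shows "\<exists>t. c - a = t *\<^sub>R (b - a)"
proof -
  define p q where "p = slope b - slope a" and "q = slope c - slope a"
  have "p \<noteq> 0" using Sigma_lower_slope_inj[OF \<xi> abc(1,2)] \<open>a \<noteq> b\<close> by (auto simp: p_def)
  define t where "t = Re (cnj p * q) / (norm p)\<^sup>2"
  have "cnj p * q = of_real (Re (cnj p * q))"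
    using Sigma_lower_slopes_dependent[OF \<xi> abc] by (simp add: complex_eq_iff p_def q_def)
  also have "\<dots> = of_real (t * (norm p)\<^sup>2)"
    using \<open>p \<noteq> 0\<close> by (simp add: t_def)
  also have "\<dots> = cnj p * (of_real t * p)"
    by (simp only: of_real_mult complex_norm_square mult_ac)
  finally have "q = of_real t * p"
    using \<open>p \<noteq> 0\<close> by simp
  then have "slope (c - a) = slope (t *\<^sub>R (b - a))"
    by (simp add: slope_linear p_def q_def scaleR_conv_of_real)
  moreover have "aff (c - a) \<xi> = aff (t *\<^sub>R (b - a)) \<xi>"
    using abc by (simp add: aff_linear Sigma_lower_def)
  ultimately show ?thesis by (blast intro: mink_eq_iff_aff_slope[THEN iffD2])
qed

lemma collinear_Sigma_lower:
  assumes \<xi>: "\<xi> \<in> ball 0 1"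
  shows "collinear (Sigma_lower \<phi> \<xi>)"
proof (cases "\<exists>a\<in>Sigma_lower \<phi> \<xi>. \<exists>b\<in>Sigma_lower \<phi> \<xi>. a \<noteq> b")
  case True
  then obtain a b where ab: "a \<in> Sigma_lower \<phi> \<xi>" "b \<in> Sigma_lower \<phi> \<xi>" "a \<noteq> b" by blast
  show ?thesis unfolding collinear_def
  proof (intro exI[of _ "b - a"] ballI)
    fix x y assume "x \<in> Sigma_lower \<phi> \<xi>" "y \<in> Sigma_lower \<phi> \<xi>"
    then obtain s t where st: "x - a = s *\<^sub>R (b - a)" "y - a = t *\<^sub>R (b - a)"
      using Sigma_lower_collinear_triple[OF \<xi> ab(1,2)] ab(3) by metis
    have "x - y = (x - a) - (y - a)" by simp
    also have "\<dots> = (s - t) *\<^sub>R (b - a)" by (simp only: st scaleR_diff_left)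
    finally show "\<exists>c. x - y = c *\<^sub>R (b - a)" ..
  qed
next
  case False
  then show ?thesis unfolding collinear_def by (intro exI[of _ 0]) auto
qed

lemma Sigma_lower_segment:
  assumes "\<xi> \<in> ball 0 1"
  obtains a b where "Sigma_lower \<phi> \<xi> = closed_segment a b"
  using compact_convex_collinear_segment Sigma_lower_nonempty compact_Sigma_lower
    convex_Sigma_lower collinear_Sigma_lower assms by metis

subsection \<open>Continuity of \<open>E\<close>\<close>

lemma seg_mid_Sigma_lower:
  assumes "\<xi> \<in> ball 0 1"
  shows "seg_mid (Sigma_lower \<phi> \<xi>) \<in> Sigma_lower \<phi> \<xi>"
proof -
  obtain a b where "Sigma_lower \<phi> \<xi> = closed_segment a b"
    using Sigma_lower_segment[OF assms] .
  then show ?thesis by (simp add: seg_mid_closed_segment)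
qed

lemma Sigma_lower_convergent_subseq:
  assumes x: "\<forall>n. x n \<in> ball 0 1" "x \<longlonglongrightarrow> \<eta>" and \<eta>: "\<eta> \<in> ball 0 1"
    and g: "\<forall>n. g n \<in> Sigma_lower \<phi> (x n)"
  obtains r \<sigma> where "strict_mono r" "(g \<circ> r) \<longlonglongrightarrow> \<sigma>" "\<sigma> \<in> Sigma_lower \<phi> \<eta>"
proof -
  have "(\<lambda>n. M + 4 * M / (1 - norm (x n))) \<longlonglongrightarrow> M + 4 * M / (1 - norm \<eta>)"
    using \<eta> by (intro tendsto_intros x(2)) auto
  then have "Bseq (\<lambda>n. M + 4 * M / (1 - norm (x n)))"
    by (intro convergent_imp_Bseq convergentI)
  then obtain K where K: "\<forall>n. norm (M + 4 * M / (1 - norm (x n))) \<le> K"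
    using BseqE by blast
  have "norm (g n) \<le> K" for n
    using Sigma_lower_norm_bound[of "x n" "g n"] K[rule_format, of n] x(1) g by auto
  then have "bounded (range g)" by (auto simp: bounded_iff)
  then obtain r \<sigma> where r: "strict_mono r" "(g \<circ> r) \<longlonglongrightarrow> \<sigma>"
    using bounded_imp_convergent_subsequence by blast
  moreover have "\<sigma> \<in> Sigma_lower \<phi> \<eta>"
    using Sigma_lower_limit[of "x \<circ> r" \<eta> "g \<circ> r" \<sigma>] LIMSEQ_subseq_LIMSEQ[OF x(2) r(1)] x(1) \<eta> g r(2)
    by simp
  ultimately show thesis using that by blast
qed

text \<open>Moving away from \<open>\<eta>\<close> in the direction \<open>slope a - slope b\<close> favours the endpoint \<open>a\<close>,
  the support plane in \<open>\<Sigma>(\<eta>)\<close> that is steepest in this direction.\<close>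

lemma Sigma_lower_limit_from_direction:
  assumes \<eta>: "\<eta> \<in> ball 0 1" and ab: "Sigma_lower \<phi> \<eta> = closed_segment a b"
    and t: "\<forall>n. t n > 0" "\<forall>n. \<eta> + of_real (t n) * (slope a - slope b) \<in> ball 0 1"
    and g: "\<forall>n. g n \<in> Sigma_lower \<phi> (\<eta> + of_real (t n) * (slope a - slope b))"
    and \<sigma>: "g \<longlonglongrightarrow> \<sigma>" "\<sigma> \<in> Sigma_lower \<phi> \<eta>"
  shows "\<sigma> = a"
proof -
  define P where "P = slope a - slope b"
  have a_in: "a \<in> Sigma_lower \<phi> \<eta>" and b_in: "b \<in> Sigma_lower \<phi> \<eta>"
    using ab by auto
  then have a: "a \<in> affine_minorants \<phi>" "aff a \<eta> = phi_minus \<phi> \<eta>"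
    using Sigma_lower_eq[OF \<eta>] by auto
  have shift: "aff \<tau> (\<eta> + of_real s * P) = aff \<tau> \<eta> + s * (slope \<tau> \<bullet> P)" for \<tau> s
    by (simp add: aff_eq_slope inner_add_right flip: scaleR_conv_of_real)
  have "slope a \<bullet> P \<le> slope (g n) \<bullet> P" for n
  proof -
    have x: "\<eta> + of_real (t n) * P \<in> ball 0 1" using t(2) by (simp add: P_def)
    have "g n \<in> affine_minorants \<phi>"
      and g_eq: "aff (g n) (\<eta> + of_real (t n) * P) = phi_minus \<phi> (\<eta> + of_real (t n) * P)"
      using g Sigma_lower_eq[OF x] by (auto simp: P_def)
    then have "aff (g n) \<eta> \<le> aff a \<eta>"
      using minorant_le_phi_minus \<eta> a(2) by simp
    moreover have "aff a (\<eta> + of_real (t n) * P) \<le> aff (g n) (\<eta> + of_real (t n) * P)"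
      using minorant_le_phi_minus[OF a(1)] x g_eq by (simp add: less_imp_le)
    ultimately have "t n * (slope a \<bullet> P) \<le> t n * (slope (g n) \<bullet> P)"
      unfolding shift by linarith
    then show ?thesis using t(1) by simp
  qed
  moreover have "(\<lambda>n. slope (g n) \<bullet> P) \<longlonglongrightarrow> slope \<sigma> \<bullet> P"
    unfolding slope_def inner_complex_def by (intro tendsto_intros \<sigma>(1))
  ultimately have le: "slope a \<bullet> P \<le> slope \<sigma> \<bullet> P"
    by (intro LIMSEQ_le_const) auto
  obtain u where u: "0 \<le> u" "u \<le> 1" "\<sigma> = (1 - u) *\<^sub>R a + u *\<^sub>R b"
    using \<sigma>(2) ab unfolding closed_segment_def by auto
  then have "slope \<sigma> = slope a - u *\<^sub>R P"
    unfolding u(3) P_def by (simp add: slope_linear algebra_simps)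
  then have "slope \<sigma> \<bullet> P = slope a \<bullet> P - u * (norm P)\<^sup>2"
    by (simp add: inner_diff_left power2_norm_eq_inner)
  with le have "u * (norm P)\<^sup>2 \<le> 0" by simp
  then have "u = 0 \<or> P = 0" using u(1) by (auto simp: mult_le_0_iff)
  moreover have "P = 0 \<Longrightarrow> a = b"
    using Sigma_lower_slope_inj[OF \<eta> a_in b_in] by (simp add: P_def)
  ultimately consider "u = 0" | "a = b" by blast
  then show "\<sigma> = a"
    by cases (simp_all add: u(3) flip: scaleR_add_left)
qed

lemma E_lower_tendsto_endpoint:
  assumes \<eta>: "\<eta> \<in> ball 0 1" and ab: "Sigma_lower \<phi> \<eta> = closed_segment a b" "a \<noteq> b"
  obtains x where "\<forall>n. x n \<in> ball 0 1" "x \<longlonglongrightarrow> \<eta>" "(\<lambda>n. E_lower \<phi> (x n)) \<longlonglongrightarrow> E_field a \<eta>"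
proof -
  define P where "P = slope a - slope b"
  have "P \<noteq> 0"
    using Sigma_lower_slope_inj[OF \<eta>, of a b] ab by (auto simp: P_def)
  obtain \<epsilon> where "\<epsilon> > 0" and \<epsilon>: "ball \<eta> \<epsilon> \<subseteq> ball 0 1"
    using \<eta> open_contains_ball_eq[OF open_ball] by blast
  define t where "t n = \<epsilon> / (2 * norm P) / real (Suc n)" for n
  define x where "x n = \<eta> + of_real (t n) * P" for n
  have t_pos: "\<forall>n. t n > 0" using \<open>\<epsilon> > 0\<close> \<open>P \<noteq> 0\<close> by (simp add: t_def)
  have "norm (x n - \<eta>) < \<epsilon>" for n
  proof -
    have "norm (x n - \<eta>) = t n * norm P"
      using t_pos[rule_format, of n] by (simp add: x_def norm_mult)
    also have "\<dots> = \<epsilon> / 2 / real (Suc n)"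
      using \<open>P \<noteq> 0\<close> by (simp add: t_def)
    also have "\<dots> < \<epsilon>" using \<open>\<epsilon> > 0\<close> by (simp add: field_simps add_pos_nonneg)
    finally show ?thesis .
  qed
  then have x_in: "\<forall>n. x n \<in> ball 0 1"
    using \<epsilon> by (auto simp: dist_norm norm_minus_commute subset_iff)
  have "t \<longlonglongrightarrow> 0"
    unfolding t_def by (rule LIMSEQ_Suc[OF lim_const_over_n])
  then have x_lim: "x \<longlonglongrightarrow> \<eta>"
    unfolding x_def by (auto intro!: tendsto_eq_intros)
  define g where "g n = seg_mid (Sigma_lower \<phi> (x n))" for n
  have g_in: "\<forall>n. g n \<in> Sigma_lower \<phi> (x n)"
    using x_in seg_mid_Sigma_lower by (simp add: g_def)
  obtain r \<sigma> where r: "strict_mono r" "(g \<circ> r) \<longlonglongrightarrow> \<sigma>" and \<sigma>: "\<sigma> \<in> Sigma_lower \<phi> \<eta>"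
    using Sigma_lower_convergent_subseq[OF x_in x_lim \<eta> g_in] .
  have "\<sigma> = a"
    using Sigma_lower_limit_from_direction[OF \<eta> ab(1), of "t \<circ> r" "g \<circ> r" \<sigma>] t_pos x_in g_in r(2) \<sigma>
    by (simp add: x_def P_def)
  then have "(\<lambda>n. E_lower \<phi> ((x \<circ> r) n)) \<longlonglongrightarrow> E_field a \<eta>"
    using E_field_tendsto[OF r(2) LIMSEQ_subseq_LIMSEQ[OF x_lim r(1)]] by (simp add: E_lower_def g_def)
  then show thesis
    using that[of "x \<circ> r"] x_in LIMSEQ_subseq_LIMSEQ[OF x_lim r(1)] by simp
qed

lemma isCont_E_lower_imp_singleton:
  assumes \<eta>: "\<eta> \<in> ball 0 1" and cont: "isCont (E_lower \<phi>) \<eta>"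
  shows "\<exists>\<sigma>. Sigma_lower \<phi> \<eta> = {\<sigma>}"
proof -
  obtain a b where ab: "Sigma_lower \<phi> \<eta> = closed_segment a b"
    using Sigma_lower_segment[OF \<eta>] .
  have "a = b"
  proof (rule ccontr)
    assume "a \<noteq> b"
    then obtain x where x: "x \<longlonglongrightarrow> \<eta>" and E_a: "(\<lambda>n. E_lower \<phi> (x n)) \<longlonglongrightarrow> E_field a \<eta>"
      using E_lower_tendsto_endpoint[OF \<eta> ab] by blast
    have "(\<lambda>n. E_lower \<phi> (x n)) \<longlonglongrightarrow> E_field (midpoint a b) \<eta>"
      using isCont_tendsto_compose[OF cont x] ab by (simp add: E_lower_def seg_mid_closed_segment)
    then have "E_field (a - midpoint a b) \<eta> = 0"
      using LIMSEQ_unique[OF E_a] by (simp add: E_field_diff)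
    moreover have "aff (a - midpoint a b) \<eta> = 0"
    proof -
      have "a \<in> Sigma_lower \<phi> \<eta>" "b \<in> Sigma_lower \<phi> \<eta>" using ab by auto
      then show ?thesis by (simp add: aff_linear midpoint_def Sigma_lower_def)
    qed
    ultimately have "a - midpoint a b = 0"
      using E_field_injective[of \<eta> "a - midpoint a b"] \<eta> by simp
    then have "midpoint a b = a" by (metis right_minus_eq)
    then show False using \<open>a \<noteq> b\<close> by simp
  qed
  then show ?thesis using ab by (intro exI[of _ a]) simp
qed

lemma singleton_imp_isCont_E_lower:
  assumes \<eta>: "\<eta> \<in> ball 0 1" and \<sigma>: "Sigma_lower \<phi> \<eta> = {\<sigma>}"
  shows "isCont (E_lower \<phi>) \<eta>"
proof -
  have "continuous (at \<eta> within ball 0 1) (E_lower \<phi>)"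
  proof (rule continuous_within_sequentiallyI)
    fix x assume x_lim: "x \<longlonglongrightarrow> \<eta>" and x_in: "\<forall>n. x n \<in> ball 0 1"
    define g where "g n = seg_mid (Sigma_lower \<phi> (x n))" for n
    have g_in: "\<forall>n. g n \<in> Sigma_lower \<phi> (x n)"
      using x_in seg_mid_Sigma_lower by (simp add: g_def)
    have "g \<longlonglongrightarrow> \<sigma>"
    proof (rule LIMSEQ_if_subseqs_have_LIMSEQ_subseq)
      fix r :: "nat \<Rightarrow> nat" assume "strict_mono r"
      then obtain s \<sigma>' where "strict_mono s" "(g \<circ> r \<circ> s) \<longlonglongrightarrow> \<sigma>'" "\<sigma>' \<in> Sigma_lower \<phi> \<eta>"
        using Sigma_lower_convergent_subseq[of "x \<circ> r" \<eta> "g \<circ> r"] x_in x_lim \<eta> g_in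
          LIMSEQ_subseq_LIMSEQ by (metis comp_apply)
      then show "\<exists>s. strict_mono s \<and> (g \<circ> r \<circ> s) \<longlonglongrightarrow> \<sigma>" using \<sigma> by auto
    qed
    then have "(\<lambda>n. E_lower \<phi> (x n)) \<longlonglongrightarrow> E_field \<sigma> \<eta>"
      unfolding E_lower_def g_def[symmetric] using x_lim by (rule E_field_tendsto)
    moreover have "E_lower \<phi> \<eta> = E_field \<sigma> \<eta>"
      using seg_mid_closed_segment[of \<sigma> \<sigma>] \<sigma> by (simp add: E_lower_def)
    ultimately show "(\<lambda>n. E_lower \<phi> (x n)) \<longlonglongrightarrow> E_lower \<phi> \<eta>" by simp
  qed
  then show ?thesis using continuous_within_open[OF \<eta> open_ball] by blast
qed

lemma isCont_E_lower_iff: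
  "\<eta> \<in> ball 0 1 \<Longrightarrow> isCont (E_lower \<phi>) \<eta> \<longleftrightarrow> (\<exists>\<sigma>. Sigma_lower \<phi> \<eta> = {\<sigma>})"
  using isCont_E_lower_imp_singleton singleton_imp_isCont_E_lower by blast

end

lemma support_fn_bounded:
  assumes "continuous_on (sphere 0 1) X"
  obtains M where "\<forall>z\<in>sphere 0 1. \<bar>support_fn X z\<bar> \<le> M"
proof -
  have "continuous_on (sphere 0 1) (support_fn X)"
    unfolding support_fn_def by (intro continuous_intros assms) auto
  then have "bounded (support_fn X ` sphere 0 1)"
    by (intro compact_imp_bounded compact_continuous_image) auto
  then show thesis using that by (auto simp: bounded_iff)
qed

lemma phi_plus_eq: "phi_plus \<phi> \<xi> = - phi_minus (\<lambda>z. - \<phi> z) \<xi>"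
proof -
  have "{c + b1 * Re \<xi> + b2 * Im \<xi> | c b1 b2. \<forall>z\<in>sphere 0 1. c + b1 * Re z + b2 * Im z \<ge> \<phi> z}
      = uminus ` {c + b1 * Re \<xi> + b2 * Im \<xi> | c b1 b2.
                    \<forall>z\<in>sphere 0 1. c + b1 * Re z + b2 * Im z \<le> - \<phi> z}"
    (is "?maj = uminus ` ?min")
  proof (intro equalityI subsetI)
    fix t assume "t \<in> ?maj"
    then obtain c b1 b2 where "t = c + b1 * Re \<xi> + b2 * Im \<xi>"
      and "\<forall>z\<in>sphere 0 1. c + b1 * Re z + b2 * Im z \<ge> \<phi> z" by blast
    then have "- t \<in> ?min"
      by (intro CollectI exI[of _ "- c"] exI[of _ "- b1"] exI[of _ "- b2"]) auto
    then show "t \<in> uminus ` ?min" by (simp add: mem_uminus_image)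
  next
    fix t assume "t \<in> uminus ` ?min"
    then obtain c b1 b2 where "- t = c + b1 * Re \<xi> + b2 * Im \<xi>"
      and "\<forall>z\<in>sphere 0 1. c + b1 * Re z + b2 * Im z \<le> - \<phi> z" by (auto simp: mem_uminus_image)
    then show "t \<in> ?maj"
      by (intro CollectI exI[of _ "- c"] exI[of _ "- b1"] exI[of _ "- b2"]) auto
  qed
  then show ?thesis by (simp add: phi_plus_def phi_minus_def Inf_real_def image_image)
qed

lemma Sigma_plus_eq: "Sigma_plus X \<xi> = uminus ` Sigma_lower (\<lambda>z. - support_fn X z) \<xi>"
  by (rule set_eqI)
    (auto simp: mem_uminus_image Sigma_plus_def Sigma_lower_def mink_inner_lift phi_plus_eq
      aff_linear minus_le_iff le_minus_iff)

lemma E_plus_eq: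
  assumes "\<forall>z\<in>sphere 0 1. \<bar>support_fn X z\<bar> \<le> M" and "\<xi> \<in> ball 0 1"
  shows "E_plus X \<xi> = - E_lower (\<lambda>z. - support_fn X z) \<xi>"
proof -
  have bounded: "\<forall>z\<in>sphere 0 1. \<bar>- support_fn X z\<bar> \<le> M" using assms(1) by simp
  obtain a b where ab: "Sigma_lower (\<lambda>z. - support_fn X z) \<xi> = closed_segment a b"
    using Sigma_lower_segment[OF bounded assms(2)] .
  have "midpoint (- a) (- b) = - midpoint a b"
    by (simp add: midpoint_def algebra_simps)
  then show ?thesis
    by (simp add: E_plus_def E_lower_def Sigma_plus_eq ab uminus_image_closed_segment
        seg_mid_closed_segment E_field_uminus)
qed

theorem lemma4p11:
  fixes X :: "complex \<Rightarrow> complex" and \<eta> :: complex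
  assumes "is_vector_field_S1 X"
    and "continuous_on (sphere 0 1) X"
    and "\<eta> \<in> ball 0 1"
  shows "(isCont (E_minus X) \<eta> \<longleftrightarrow> (\<exists>\<sigma>. Sigma_minus X \<eta> = {\<sigma>}))
       \<and> (isCont (E_plus X) \<eta> \<longleftrightarrow> (\<exists>\<sigma>. Sigma_plus X \<eta> = {\<sigma>}))"
proof
  obtain M where M: "\<forall>z\<in>sphere 0 1. \<bar>support_fn X z\<bar> \<le> M"
    using support_fn_bounded[OF assms(2)] .
  then have M': "\<forall>z\<in>sphere 0 1. \<bar>- support_fn X z\<bar> \<le> M" by simp
  show "isCont (E_minus X) \<eta> \<longleftrightarrow> (\<exists>\<sigma>. Sigma_minus X \<eta> = {\<sigma>})"
    unfolding E_minus_eq Sigma_minus_eq using isCont_E_lower_iff[OF M assms(3)] .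
  have "\<forall>\<^sub>F \<xi> in nhds \<eta>. E_plus X \<xi> = - E_lower (\<lambda>z. - support_fn X z) \<xi>"
    using eventually_nhds_in_open[OF open_ball assms(3)] by eventually_elim (rule E_plus_eq[OF M])
  then have "isCont (E_plus X) \<eta> \<longleftrightarrow> isCont (E_lower (\<lambda>z. - support_fn X z)) \<eta>"
    using isCont_cong isCont_uminus_iff by metis
  then show "isCont (E_plus X) \<eta> \<longleftrightarrow> (\<exists>\<sigma>. Sigma_plus X \<eta> = {\<sigma>})"
    unfolding Sigma_plus_eq ex_singleton_uminus_image using isCont_E_lower_iff[OF M' assms(3)] by simp
qed

end
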